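(* Let $S=\{p_1,\dots,p_n\}\subset\mathbb{R}^d$ satisfy the sparsity and bounded doubling dimension assumptions, and let $W\in\mathbb{R}^{n\times n}$ be its Gaussian affinity matrix. Then there is a factor $\mathrm{polylog}(n)=(\log n)^{O(d_0)}$ such that for all $1\le i\le n$, $$\frac{1}{\mathrm{polylog}(n)}\,\frac{\|W\|_F^2}{n}\;\le\; C_i\;\le\;\mathrm{polylog}(n)\,\frac{\|W\|_F^2}{n},$$ where $C_i=\|W_{:,i}\|^2$ is the squared norm of the $i$-th column of $W$.
   Context: $W_{i,j}=\exp(-\|p_i-p_j\|^2/\sigma)$ with a fixed parameter $\sigma>0$ treated as a constant. Sparsity assumption: for all $i\ne j$, $\|p_i-p_j\|\ge 0.1\,\sigma/\log n$. Bounded doubling dimension assumption: there is a constant $d_0$ such that for every $r>0$ and $\epsilon>0$, any ball of radius $r$ contains at most $O((r/\epsilon)^{d_0})$ points of $S$ that are pairwise at distance at least $\epsilon$. $\|W\|_F$ is the Frobenius norm. *)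

theory Defs
  imports "HOL-Analysis.Analysis"
begin

text \<open>Gaussian affinity matrix of points p 0, ..., p (n-1) (0-based indices).\<close>
definition gauss_W :: "real \<Rightarrow> (nat \<Rightarrow> 'a::real_normed_vector) \<Rightarrow> nat \<Rightarrow> nat \<Rightarrow> real" where
  "gauss_W \<sigma> p i j = exp (- (norm (p i - p j))\<^sup>2 / \<sigma>)"

definition frob_sq :: "nat \<Rightarrow> (nat \<Rightarrow> nat \<Rightarrow> real) \<Rightarrow> real" where
  "frob_sq n W = (\<Sum>i<n. \<Sum>j<n. (W i j)\<^sup>2)"

definition col_sq :: "nat \<Rightarrow> (nat \<Rightarrow> nat \<Rightarrow> real) \<Rightarrow> nat \<Rightarrow> real" where
  "col_sq n W i = (\<Sum>j<n. (W j i)\<^sup>2)"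

definition sparse_pts :: "real \<Rightarrow> nat \<Rightarrow> (nat \<Rightarrow> 'a::real_normed_vector) \<Rightarrow> bool" where
  "sparse_pts \<sigma> n p \<longleftrightarrow>
     (\<forall>i<n. \<forall>j<n. i \<noteq> j \<longrightarrow> norm (p i - p j) \<ge> 0.1 * \<sigma> / ln (real n))"

text \<open>Bounded doubling dimension with exponent d0 and implied O-constant K.
  The bound is read as K * max 1 ((r/eps)^d0), since a single point is always an
  eps-separated subset of any ball containing it.\<close>
definition doubling_pts :: "real \<Rightarrow> real \<Rightarrow> nat \<Rightarrow> (nat \<Rightarrow> 'a::real_normed_vector) \<Rightarrow> bool" where
  "doubling_pts d0 K n p \<longleftrightarrow>
     (\<forall>c r \<epsilon> T. r > 0 \<longrightarrow> \<epsilon> > 0 \<longrightarrow> T \<subseteq> p ` {..<n} \<longrightarrow> T \<subseteq> cball c r \<longrightarrow>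
        (\<forall>x\<in>T. \<forall>y\<in>T. x \<noteq> y \<longrightarrow> dist x y \<ge> \<epsilon>) \<longrightarrow>
        real (card T) \<le> K * max 1 ((r / \<epsilon>) powr d0))"

end

theory Submission
  imports Defs
begin

text \<open>Every column satisfies 1 \<le> C_i (from the diagonal entry exp 0 = 1) and C_i \<le> polylog n.
  For the upper bound, split column i at radius R = sqrt (\<sigma> ln n): each far entry squared is at
  most exp (-R^2/\<sigma>) = 1/n, so the far part contributes at most 1, while the near points are
  (0.1 \<sigma>/ln n)-separated inside a ball of radius R, so by the doubling assumption there are
  at most K (R/\<epsilon>)^d0 = O((ln n)^(3 d0/2)) of them. Summing the column bounds gives
  n \<le> \<parallel>W\<parallel>_F^2 \<le> n polylog n, and both inequalities follow.\<close>

lemma frob_sq_eq_sum_col_sq: "frob_sq n W = (\<Sum>i<n. col_sq n W i)"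
  unfolding frob_sq_def col_sq_def by (rule sum.swap)

lemma col_sq_comparable_to_mean:
  fixes W :: "nat \<Rightarrow> nat \<Rightarrow> real"
  assumes lower: "\<And>j. j < n \<Longrightarrow> 1 \<le> col_sq n W j"
    and upper: "\<And>j. j < n \<Longrightarrow> col_sq n W j \<le> P"
    and i: "i < n"
  shows "frob_sq n W / (P * real n) \<le> col_sq n W i \<and> col_sq n W i \<le> P * frob_sq n W / real n"
proof -
  have n: "real n > 0" using i by simp
  have P: "P \<ge> 1" using lower[OF i] upper[OF i] by linarith
  have "real n \<le> frob_sq n W"
    using sum_mono[of "{..<n}" "\<lambda>_. 1" "col_sq n W"] lower by (simp add: frob_sq_eq_sum_col_sq)
  moreover have "frob_sq n W \<le> real n * P"
    using sum_mono[of "{..<n}" "col_sq n W" "\<lambda>_. P"] upper by (simp add: frob_sq_eq_sum_col_sq)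
  ultimately have "frob_sq n W / (P * real n) \<le> 1" and "P \<le> P * frob_sq n W / real n"
    using n P by (simp_all add: field_simps)
  with lower[OF i] upper[OF i] show ?thesis by linarith
qed

lemma gauss_W_self [simp]: "gauss_W \<sigma> p i i = 1"
  by (simp add: gauss_W_def)

lemma gauss_W_sq_le:
  assumes "\<sigma> > 0"
  shows "(gauss_W \<sigma> p j i)\<^sup>2 \<le> exp (- (norm (p j - p i))\<^sup>2 / \<sigma>)"
proof -
  have "0 \<le> (norm (p j - p i))\<^sup>2 / \<sigma>" using assms by simp
  then show ?thesis
    by (simp add: gauss_W_def power2_eq_square exp_add[symmetric])
qed

lemma gauss_W_sq_le_one:
  assumes "\<sigma> > 0"
  shows "(gauss_W \<sigma> p j i)\<^sup>2 \<le> 1"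
  using gauss_W_sq_le[OF assms, of p j i] assms by (simp add: order_trans)

lemma col_sq_gauss_W_ge_one:
  assumes "i < n"
  shows "1 \<le> col_sq n (gauss_W \<sigma> p) i"
  using member_le_sum[of i "{..<n}" "\<lambda>j. (gauss_W \<sigma> p j i)\<^sup>2"] assms
  by (simp add: col_sq_def)

lemma col_sq_gauss_W_le_near_far:
  assumes "\<sigma> > 0" and "R \<ge> 0"
  shows "col_sq n (gauss_W \<sigma> p) i
           \<le> real (card {j\<in>{..<n}. norm (p j - p i) \<le> R}) + real n * exp (- R\<^sup>2 / \<sigma>)"
proof -
  define f where "f j = (gauss_W \<sigma> p j i)\<^sup>2" for j
  define Near where "Near = {j\<in>{..<n}. norm (p j - p i) \<le> R}"
  define Far where "Far = {..<n} - Near"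
  have split: "col_sq n (gauss_W \<sigma> p) i = sum f Near + sum f Far"
    using sum.subset_diff[of Near "{..<n}" f]
    by (auto simp: col_sq_def f_def Far_def Near_def add.commute)
  have "sum f Near \<le> sum (\<lambda>_. 1) Near"
    by (rule sum_mono) (simp add: f_def gauss_W_sq_le_one[OF assms(1)])
  moreover have "sum f Far \<le> real n * exp (- R\<^sup>2 / \<sigma>)"
  proof -
    have "f j \<le> exp (- R\<^sup>2 / \<sigma>)" if "j \<in> Far" for j
    proof -
      have "R < norm (p j - p i)" using that by (auto simp: Far_def Near_def)
      then have "R\<^sup>2 \<le> (norm (p j - p i))\<^sup>2" using assms(2) by (simp add: power_mono)
      then have "- (norm (p j - p i))\<^sup>2 / \<sigma> \<le> - R\<^sup>2 / \<sigma>"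
        using assms(1) by (simp add: divide_right_mono)
      then show ?thesis
        using gauss_W_sq_le[OF assms(1), of p j i] by (simp add: f_def order_trans)
    qed
    then have "sum f Far \<le> real (card Far) * exp (- R\<^sup>2 / \<sigma>)"
      using sum_bounded_above[of Far f] by simp
    also have "real (card Far) * exp (- R\<^sup>2 / \<sigma>) \<le> real n * exp (- R\<^sup>2 / \<sigma>)"
      using card_mono[of "{..<n}" Far] by (intro mult_right_mono) (auto simp: Far_def)
    finally show ?thesis .
  qed
  ultimately show ?thesis using split by (simp add: Near_def)
qed

lemma card_near_le_doubling:
  assumes dbl: "doubling_pts d0 K n p" and "r > 0" and "\<epsilon> > 0"
    and sep: "\<And>j k. j < n \<Longrightarrow> k < n \<Longrightarrow> j \<noteq> k \<Longrightarrow> \<epsilon> \<le> norm (p j - p k)"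
  shows "real (card {j\<in>{..<n}. norm (p j - c) \<le> r}) \<le> K * max 1 ((r / \<epsilon>) powr d0)"
proof -
  define J where "J = {j\<in>{..<n}. norm (p j - c) \<le> r}"
  have "inj_on p J"
    by (rule inj_onI) (use sep \<open>\<epsilon> > 0\<close> in \<open>force simp: J_def\<close>)
  then have "card J = card (p ` J)" by (simp add: card_image)
  moreover have "p ` J \<subseteq> p ` {..<n}" and "p ` J \<subseteq> cball c r"
    by (auto simp: J_def dist_norm norm_minus_commute)
  moreover have "\<forall>x\<in>p ` J. \<forall>y\<in>p ` J. x \<noteq> y \<longrightarrow> \<epsilon> \<le> dist x y"
    using sep by (auto simp: J_def dist_norm)
  ultimately show ?thesis
    using dbl assms(2,3) unfolding doubling_pts_def J_def by auto
qed

lemma radius_over_separation_powr: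
  fixes \<sigma> L d0 :: real
  assumes "\<sigma> > 0" and "L > 0"
  shows "(sqrt (\<sigma> * L) / (0.1 * \<sigma> / L)) powr d0 = (10 / sqrt \<sigma>) powr d0 * L powr (3/2 * d0)"
proof -
  have "L powr (3/2) = L powr (1 + 1/2)" by simp
  also have "\<dots> = L * sqrt L"
    using assms(2) by (simp only: powr_add powr_half_sqrt powr_one_gt_zero_iff) simp
  finally have "L powr (3/2) = L * sqrt L" .
  moreover have "sqrt \<sigma> * sqrt \<sigma> = \<sigma>" using assms(1) by simp
  ultimately have "sqrt (\<sigma> * L) / (0.1 * \<sigma> / L) = 10 / sqrt \<sigma> * L powr (3/2)"
    using assms by (simp add: real_sqrt_mult field_simps)
  moreover have "(10 / sqrt \<sigma> * L powr (3/2)) powr d0 = (10 / sqrt \<sigma>) powr d0 * (L powr (3/2)) powr d0"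
    by (rule powr_mult)
  ultimately show ?thesis by (simp add: powr_powr)
qed

lemma col_sq_gauss_W_le:
  assumes "\<sigma> > 0" and "n \<ge> 2" and sparse: "sparse_pts \<sigma> n p" and dbl: "doubling_pts d0 K n p"
  shows "col_sq n (gauss_W \<sigma> p) i
           \<le> 1 + K * max 1 ((10 / sqrt \<sigma>) powr d0 * ln (real n) powr (3/2 * d0))"
proof -
  define L where "L = ln (real n)"
  define R where "R = sqrt (\<sigma> * L)"
  have L: "L > 0" using assms(2) by (simp add: L_def)
  have R: "R > 0" using assms(1) L by (simp add: R_def)
  have "real n * exp (- R\<^sup>2 / \<sigma>) = 1"
    using assms(1,2) L by (simp add: R_def L_def exp_minus field_simps)
  moreover have "real (card {j\<in>{..<n}. norm (p j - p i) \<le> R})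
                   \<le> K * max 1 ((R / (0.1 * \<sigma> / L)) powr d0)"
    by (rule card_near_le_doubling[OF dbl R])
      (use assms(1) L sparse in \<open>auto simp: sparse_pts_def L_def\<close>)
  ultimately show ?thesis
    using col_sq_gauss_W_le_near_far[OF assms(1) less_imp_le[OF R], of n p i]
      radius_over_separation_powr[OF assms(1) L, of d0]
    by (simp add: R_def L_def)
qed

lemma add_mult_le_scaled:
  fixes a b y0 y :: real
  assumes "0 < y0" and "y0 \<le> 1" and "y0 \<le> y" and "0 \<le> a" and "0 \<le> b"
  shows "a + b * y \<le> (a + b) / y0 * y"
proof -
  have "1 \<le> y / y0" and "y \<le> y / y0"
    using assms by (simp_all add: le_divide_eq mult_le_cancel_left1)
  then have "a * 1 \<le> a * (y / y0)" and "b * y \<le> b * (y / y0)"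
    using assms(4,5) by (metis mult_left_mono)+
  then have "a + b * y \<le> a * (y / y0) + b * (y / y0)" by linarith
  also have "\<dots> = (a + b) / y0 * y" by (simp add: algebra_simps add_divide_distrib)
  finally show ?thesis .
qed

lemma col_sq_gauss_W_le_polylog:
  assumes "\<sigma> > 0" and "d0 \<ge> 0" and "K \<ge> 0" and "n \<ge> 2"
    and "sparse_pts \<sigma> n p" and "doubling_pts d0 K n p"
  shows "col_sq n (gauss_W \<sigma> p) i
           \<le> (1 + K + K * (10 / sqrt \<sigma>) powr d0) / ln 2 powr (3/2 * d0) * ln (real n) powr (3/2 * d0)"
proof -
  define c where "c = (10 / sqrt \<sigma>) powr d0"
  define y where "y = ln (real n) powr (3/2 * d0)"
  have "0 < ln (2::real) powr (3/2 * d0)" by simp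
  moreover have "ln (2::real) powr (3/2 * d0) \<le> 1"
    using assms(2) ln_2_less_1 powr_mono2[of "3/2 * d0" "ln 2" 1] by simp
  moreover have "ln (2::real) powr (3/2 * d0) \<le> y"
    unfolding y_def by (rule powr_mono2) (use assms(2,4) in auto)
  moreover have "0 \<le> y" by (simp add: y_def)
  then have "1 + K * max 1 (c * y) \<le> (1 + K) + K * c * y"
    using assms(3) by (simp add: max_def c_def)
  ultimately show ?thesis
    using col_sq_gauss_W_le[OF assms(1,4-6), of i] assms(3)
      add_mult_le_scaled[of "ln 2 powr (3/2 * d0)" y "1 + K" "K * c"]
    by (simp add: c_def y_def algebra_simps)
qed

theorem corollary1:
  shows "\<exists>B>0. \<forall>\<sigma> d0 K. \<sigma> > 0 \<and> d0 \<ge> 0 \<and> K > 0 \<longrightarrow>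
    (\<exists>A>0. \<forall>n (p :: nat \<Rightarrow> 'a::euclidean_space).
       n \<ge> 2 \<and> sparse_pts \<sigma> n p \<and> doubling_pts d0 K n p \<longrightarrow>
       (let polylog = A * ln (real n) powr (B * d0); W = gauss_W \<sigma> p in
        \<forall>i<n. frob_sq n W / (polylog * real n) \<le> col_sq n W i \<and>
              col_sq n W i \<le> polylog * frob_sq n W / real n))"
proof (rule exI[of _ "3/2"], intro conjI allI impI)
  fix \<sigma> d0 K :: real
  assume params: "\<sigma> > 0 \<and> d0 \<ge> 0 \<and> K > 0"
  define A where "A = (1 + K + K * (10 / sqrt \<sigma>) powr d0) / ln 2 powr (3/2 * d0)"
  have "A > 0" using params by (simp add: A_def add_pos_nonneg)
  moreover have "\<forall>i<n. frob_sq n W / (A * ln (real n) powr (3/2 * d0) * real n) \<le> col_sq n W i \<and>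
                   col_sq n W i \<le> A * ln (real n) powr (3/2 * d0) * frob_sq n W / real n"
    if "n \<ge> 2 \<and> sparse_pts \<sigma> n p \<and> doubling_pts d0 K n p" and W: "W = gauss_W \<sigma> p"
    for n and p :: "nat \<Rightarrow> 'a" and W
  proof (intro allI impI col_sq_comparable_to_mean)
    show "col_sq n W j \<le> A * ln (real n) powr (3/2 * d0)" for j
      using that params col_sq_gauss_W_le_polylog[of \<sigma> d0 K n p j] by (simp add: A_def)
  qed (use W col_sq_gauss_W_ge_one in auto)
  ultimately show "\<exists>A>0. \<forall>n (p :: nat \<Rightarrow> 'a).
       n \<ge> 2 \<and> sparse_pts \<sigma> n p \<and> doubling_pts d0 K n p \<longrightarrow>
       (let polylog = A * ln (real n) powr (3/2 * d0); W = gauss_W \<sigma> p in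
        \<forall>i<n. frob_sq n W / (polylog * real n) \<le> col_sq n W i \<and>
              col_sq n W i \<le> polylog * frob_sq n W / real n)"
    by (auto simp: Let_def)
qed simp

end
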